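(* Let $\mathcal{M}$ and $\mathcal{N}$ be matroids on the same finite ground set $V$, and let $k\ge1$ be an integer. If $r(\mathcal{M}[X])+r(\mathcal{N}[V\setminus X])\ge k+1$ for all $X\subseteq V$ for which $V\setminus X$ is a flat of $\mathcal{N}$ of rank at most $k-1$, then $\mathbf{RG}(\mathcal{M},\mathcal{N};k)$ is connected.
   Context: $\mathcal{M}[X]=\{A\in\mathcal{M}:A\subseteq X\}$ and $r$ is matroid rank. A flat of $\mathcal{N}$ is $F\subseteq V$ with $r(\mathcal{N}[F\cup\{x\}])>r(\mathcal{N}[F])$ for every $x\in V\setminus F$. $\mathbf{RG}(\mathcal{M},\mathcal{N};k)$ is the graph whose vertices are the common independent sets of $\mathcal{M}$ and $\mathcal{N}$ of cardinality $k$, two such sets $S,T$ being adjacent if $S\cup T$ is an independent set of $\mathcal{M}$ of cardinality $k+1$. *)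

theory Defs
  imports Main
begin

definition matroid :: "'a set \<Rightarrow> 'a set set \<Rightarrow> bool" where
  "matroid V M \<longleftrightarrow> finite V \<and> (\<forall>A\<in>M. A \<subseteq> V) \<and> {} \<in> M
     \<and> (\<forall>A\<in>M. \<forall>B. B \<subseteq> A \<longrightarrow> B \<in> M)
     \<and> (\<forall>A\<in>M. \<forall>B\<in>M. card A < card B \<longrightarrow> (\<exists>x\<in>B - A. insert x A \<in> M))"

definition restr :: "'a set set \<Rightarrow> 'a set \<Rightarrow> 'a set set" where
  "restr M X = {A \<in> M. A \<subseteq> X}"

definition mrank :: "'a set set \<Rightarrow> nat" where
  "mrank M = Max (card ` M)"

definition is_flat :: "'a set \<Rightarrow> 'a set set \<Rightarrow> 'a set \<Rightarrow> bool" where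
  "is_flat V N F \<longleftrightarrow> F \<subseteq> V \<and>
     (\<forall>x\<in>V - F. mrank (restr N (insert x F)) > mrank (restr N F))"

definition rg_vertices :: "'a set set \<Rightarrow> 'a set set \<Rightarrow> nat \<Rightarrow> 'a set set" where
  "rg_vertices M N k = {S. S \<in> M \<and> S \<in> N \<and> card S = k}"

definition rg_adj :: "'a set set \<Rightarrow> 'a set set \<Rightarrow> nat \<Rightarrow> 'a set \<Rightarrow> 'a set \<Rightarrow> bool" where
  "rg_adj M N k S T \<longleftrightarrow> S \<in> rg_vertices M N k \<and> T \<in> rg_vertices M N k
     \<and> S \<union> T \<in> M \<and> card (S \<union> T) = k + 1"

definition rg_connected :: "'a set set \<Rightarrow> 'a set set \<Rightarrow> nat \<Rightarrow> bool" where
  "rg_connected M N k \<longleftrightarrow>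
     (\<forall>S\<in>rg_vertices M N k. \<forall>T\<in>rg_vertices M N k. (rg_adj M N k)\<^sup>*\<^sup>* S T)"

end

theory Submission
  imports Defs
begin

text \<open>Induct on the distance card (S - T) between two vertices S, T; write S = I \<union> Sp and
  T = I \<union> Tp with I = S \<inter> T, and let F be the closure of I in N. If some element of Tp can be
  added to S in M (or one of Sp to T), one edge brings S closer to T. Otherwise call y \<notin> S a
  source if S + y is independent in M, and consider the exchange digraph of S whose arcs
  y' \<rightarrow> y pass through some x \<in> S \<inter> F with S - x + y' independent in M and S - x + y
  independent in N. If no source were reachable from outside S \<union> F, then the closure G in N of
  the elements of I that cannot be exchanged against a reachable element, with X = V - G,
  would violate the rank condition. Along a shortest path to a source, exchanging its last arc
  replaces I by another basis of F and moves both S and T one edge, until the source itself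
  lies outside F; then it can be exchanged into both S and T, which yields neighbours at
  distance card Sp - 1.\<close>

lemma matroid_finite_ground: "matroid V M \<Longrightarrow> finite V"
  unfolding matroid_def by blast

lemma matroid_indep_subset_ground: "matroid V M \<Longrightarrow> A \<in> M \<Longrightarrow> A \<subseteq> V"
  unfolding matroid_def by blast

lemma matroid_indep_finite: "matroid V M \<Longrightarrow> A \<in> M \<Longrightarrow> finite A"
  unfolding matroid_def by (meson finite_subset)

lemma matroid_indep_subset: "matroid V M \<Longrightarrow> A \<in> M \<Longrightarrow> B \<subseteq> A \<Longrightarrow> B \<in> M"
  unfolding matroid_def by blast

lemma matroid_augment:
  "matroid V M \<Longrightarrow> A \<in> M \<Longrightarrow> B \<in> M \<Longrightarrow> card A < card B \<Longrightarrow> \<exists>x\<in>B - A. insert x A \<in> M"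
  unfolding matroid_def by blast

lemma matroid_augment_to_card:
  assumes "matroid V M" "A \<in> M" "B \<in> M" "card A \<le> card B"
  shows "\<exists>C. A \<subseteq> C \<and> C \<subseteq> A \<union> B \<and> C \<in> M \<and> card C = card B"
  using assms(2,4)
proof (induction "card B - card A" arbitrary: A)
  case 0
  then have "card A = card B" by simp
  then show ?case using 0 by blast
next
  case (Suc n)
  then have "card A < card B" by simp
  then obtain x where x: "x \<in> B - A" "insert x A \<in> M"
    using matroid_augment[OF assms(1) Suc.prems(1) assms(3)] by blast
  have "card (insert x A) = Suc (card A)"
    using x(1) matroid_indep_finite[OF assms(1) Suc.prems(1)] by simp
  then have "n = card B - card (insert x A)" "card (insert x A) \<le> card B"
    using Suc.hyps(2) \<open>card A < card B\<close> by simp_all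
  then obtain C where "insert x A \<subseteq> C" "C \<subseteq> insert x A \<union> B" "C \<in> M" "card C = card B"
    using Suc.hyps(1) x(2) by blast
  then show ?case using x(1) by blast
qed

lemma matroid_augment_other:
  assumes "matroid V M" "P \<in> M" "C \<in> M" "card P < card C" "C - P \<subseteq> {a, b}" "insert a P \<notin> M"
  shows "insert b P \<in> M"
  using matroid_augment[OF assms(1-4)] assms(5,6) by blast

lemma matroid_insert_transfer:
  assumes "matroid V M" "S \<in> M" "T \<in> M" "card S = card T"
    and "\<forall>w\<in>S - T. insert w T \<notin> M" "insert z S \<in> M" "z \<notin> S"
  shows "insert z T \<in> M"
proof -
  have "card T < card (insert z S)"
    using assms(4,7) matroid_indep_finite[OF assms(1,2)] by simp
  then show ?thesis using matroid_augment[OF assms(1,3,6)] assms(5) by blast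
qed

lemma card_insert_Diff_singleton:
  "finite S \<Longrightarrow> x \<in> S \<Longrightarrow> y \<notin> S \<Longrightarrow> card (insert y (S - {x})) = card S"
proof -
  assume a: "finite S" "x \<in> S" "y \<notin> S"
  then have "card (insert y (S - {x})) = Suc (card S - 1)" by (simp add: card_Diff_singleton)
  also have "\<dots> = card S" using a card_gt_0_iff by (metis Suc_pred' empty_iff)
  finally show ?thesis .
qed

lemma matroid_exchange_extend:
  assumes "matroid V M" "B \<in> M" "K \<subseteq> B" "y \<notin> B" "insert y K \<in> M" "card K < card B"
  shows "\<exists>x\<in>B - K. insert y (B - {x}) \<in> M"
proof -
  have fin: "finite B" using matroid_indep_finite[OF assms(1,2)] .
  have "card (insert y K) \<le> card B"
    using assms(3,4,6) finite_subset[OF assms(3) fin] by (subst card_insert_disjoint) auto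
  then obtain C where C: "insert y K \<subseteq> C" "C \<subseteq> insert y B" "C \<in> M" "card C = card B"
    using matroid_augment_to_card[OF assms(1,5,2)] assms(3) by blast
  have "C \<noteq> insert y B" using C(4) assms(4) fin by (metis card_insert_disjoint n_not_Suc_n)
  then obtain x where x: "x \<in> B" "x \<notin> C" using C(1,2) by blast
  have "C \<subseteq> insert y (B - {x})" using C(2) x(2) by blast
  moreover have "card (insert y (B - {x})) = card C"
    using card_insert_Diff_singleton[OF fin x(1) assms(4)] C(4) by simp
  ultimately have "C = insert y (B - {x})"
    using fin by (intro card_subset_eq) auto
  then show ?thesis using x C(1,3) by blast
qed

lemma matroid_card_le_maximal:
  assumes "matroid V M" "B \<in> M" "\<forall>y\<in>X - B. insert y B \<notin> M" "A \<in> M" "A \<subseteq> X \<union> B"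
  shows "card A \<le> card B"
proof (rule ccontr)
  assume "\<not> card A \<le> card B"
  then obtain y where "y \<in> A - B" "insert y B \<in> M"
    using matroid_augment[OF assms(1,2,4)] by auto
  then show False using assms(3,5) by blast
qed

lemma matroid_exchange_insert:
  assumes M: "matroid V M" and x: "x \<in> S" and y: "y \<notin> S" and z: "z \<notin> S"
    and "insert y (S - {x}) \<in> M" "insert y S \<notin> M" "insert z S \<in> M"
  shows "insert z (insert y (S - {x})) \<in> M"
proof (rule matroid_augment_other[OF M assms(5,7)])
  have "finite S" using matroid_indep_finite[OF M assms(7)] by simp
  then show "card (insert y (S - {x})) < card (insert z S)"
    using card_insert_Diff_singleton[OF _ x y] z by simp
  show "insert z S - insert y (S - {x}) \<subseteq> {x, z}" by blast
  have "insert x (insert y (S - {x})) = insert y S" using x by blast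
  then show "insert x (insert y (S - {x})) \<notin> M" using assms(6) by simp
qed

lemma matroid_double_exchange:
  assumes N: "matroid V N" and ab: "a \<in> S" "b \<in> S" "a \<noteq> b" and uv: "u \<notin> S" "v \<notin> S"
    and "insert u (S - {a}) \<in> N" "insert v (S - {b}) \<in> N" "insert u (S - {b}) \<notin> N"
  shows "insert v (insert u (S - {a, b})) \<in> N"
proof (rule matroid_augment_other[OF N _ assms(8)])
  have fin: "finite S" using matroid_indep_finite[OF N assms(8)] by simp
  show "insert u (S - {a, b}) \<in> N"
    by (rule matroid_indep_subset[OF N assms(7)]) blast
  have "2 \<le> card S" using card_mono[OF fin, of "{a, b}"] ab by simp
  then have "card (insert u (S - {a, b})) = card S - 1"
    using fin ab uv by (simp add: card_Diff_subset)
  moreover have "card (insert v (S - {b})) = card S"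
    using card_insert_Diff_singleton[OF fin ab(2) uv(2)] .
  moreover have "card S > 0" using \<open>2 \<le> card S\<close> by simp
  ultimately show "card (insert u (S - {a, b})) < card (insert v (S - {b}))" by simp
  show "insert v (S - {b}) - insert u (S - {a, b}) \<subseteq> {a, v}" by blast
  have "insert a (insert u (S - {a, b})) = insert u (S - {b})" using ab by blast
  then show "insert a (insert u (S - {a, b})) \<notin> N" using assms(9) by simp
qed

section \<open>Rank and closure\<close>

lemma finite_restr: "matroid V M \<Longrightarrow> finite (restr M X)"
proof -
  assume M: "matroid V M"
  have "restr M X \<subseteq> Pow V" using matroid_indep_subset_ground[OF M] unfolding restr_def by auto
  then show ?thesis using matroid_finite_ground[OF M] by (simp add: finite_subset)
qed

lemma mrank_restr_le:
  "matroid V M \<Longrightarrow> (\<And>A. A \<in> M \<Longrightarrow> A \<subseteq> X \<Longrightarrow> card A \<le> c) \<Longrightarrow> mrank (restr M X) \<le> c"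
  unfolding mrank_def using finite_restr[of V M X]
  by (subst Max_le_iff) (auto simp: restr_def matroid_def)

lemma card_le_mrank_restr: "matroid V M \<Longrightarrow> A \<in> M \<Longrightarrow> A \<subseteq> X \<Longrightarrow> card A \<le> mrank (restr M X)"
  unfolding mrank_def using finite_restr[of V M X] by (intro Max_ge) (auto simp: restr_def)

definition mspan :: "'a set \<Rightarrow> 'a set set \<Rightarrow> 'a set \<Rightarrow> 'a set" where
  "mspan V N I = {y \<in> V. y \<in> I \<or> insert y I \<notin> N}"

lemma subset_mspan: "matroid V N \<Longrightarrow> I \<in> N \<Longrightarrow> I \<subseteq> mspan V N I"
  unfolding mspan_def using matroid_indep_subset_ground by blast

lemma card_le_of_subset_mspan:
  assumes "matroid V N" "I \<in> N" "A \<in> N" "A \<subseteq> mspan V N I"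
  shows "card A \<le> card I"
  using matroid_card_le_maximal[OF assms(1,2) _ assms(3), of "mspan V N I"] assms(4)
  unfolding mspan_def by blast

lemma basis_of_mspan_Un_indep:
  assumes N: "matroid V N" and "I \<in> N"
    and J: "J \<subseteq> mspan V N I" "J \<in> N" "card J = card I"
    and P: "I \<union> P \<in> N" "P \<inter> mspan V N I = {}"
  shows "J \<union> P \<in> N"
proof -
  have fin: "finite I" "finite J" "finite P"
    using matroid_indep_finite[OF N] \<open>I \<in> N\<close> J(2) P(1) by blast+
  then have "card J \<le> card (I \<union> P)"
    using J(3) by (simp add: card_mono)
  then obtain C where C: "J \<subseteq> C" "C \<subseteq> J \<union> (I \<union> P)" "C \<in> N" "card C = card (I \<union> P)"
    using matroid_augment_to_card[OF N J(2) P(1)] by blast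
  have "C \<subseteq> J \<union> P"
  proof
    fix c assume c: "c \<in> C"
    show "c \<in> J \<union> P"
    proof (rule ccontr)
      assume "c \<notin> J \<union> P"
      then have "c \<in> I" "c \<notin> J" using c C(2) by auto
      moreover have "insert c J \<in> N"
        using matroid_indep_subset[OF N C(3)] c C(1) by blast
      moreover have "insert c J \<subseteq> mspan V N I"
        using \<open>c \<in> I\<close> subset_mspan[OF N \<open>I \<in> N\<close>] J(1) by blast
      ultimately have "card (insert c J) \<le> card I"
        using card_le_of_subset_mspan[OF N \<open>I \<in> N\<close>] by blast
      then show False using \<open>c \<notin> J\<close> fin(2) J(3) by simp
    qed
  qed
  moreover have "I \<inter> P = {}" using P(2) subset_mspan[OF N \<open>I \<in> N\<close>] by blast
  then have "card C = card I + card P" using C(4) fin by (simp add: card_Un_disjoint)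
  moreover have "card (J \<union> P) \<le> card J + card P" by (rule card_Un_le)
  ultimately have "C = J \<union> P"
    using fin J(3) card_mono[of "J \<union> P" C] by (intro card_subset_eq) auto
  then show ?thesis using C(3) by simp
qed

lemma mspan_disjoint:
  assumes N: "matroid V N" and "I \<union> P \<in> N" "I \<inter> P = {}"
  shows "P \<inter> mspan V N I = {}"
proof -
  have "insert p I \<in> N" if "p \<in> P" for p
    by (rule matroid_indep_subset[OF N assms(2)]) (use that in blast)
  then show ?thesis using assms(3) unfolding mspan_def by blast
qed

lemma mrank_restr_mspan:
  assumes "matroid V N" "I \<in> N"
  shows "mrank (restr N (mspan V N I)) = card I"
proof (rule antisym)
  show "mrank (restr N (mspan V N I)) \<le> card I"
    using mrank_restr_le[OF assms(1)] card_le_of_subset_mspan[OF assms] by blast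
  show "card I \<le> mrank (restr N (mspan V N I))"
    using card_le_mrank_restr[OF assms subset_mspan[OF assms]] .
qed

lemma is_flat_mspan:
  assumes N: "matroid V N" and "I \<in> N"
  shows "is_flat V N (mspan V N I)"
  unfolding is_flat_def
proof (intro conjI ballI)
  show "mspan V N I \<subseteq> V" unfolding mspan_def by blast
next
  fix x assume x: "x \<in> V - mspan V N I"
  then have "x \<notin> I" "insert x I \<in> N" unfolding mspan_def by auto
  moreover have "insert x I \<subseteq> insert x (mspan V N I)"
    using subset_mspan[OF N \<open>I \<in> N\<close>] by blast
  ultimately have "card (insert x I) \<le> mrank (restr N (insert x (mspan V N I)))"
    using card_le_mrank_restr[OF N] by blast
  moreover have "card (insert x I) = Suc (card I)"
    using \<open>x \<notin> I\<close> matroid_indep_finite[OF N \<open>I \<in> N\<close>] by simp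
  ultimately show "mrank (restr N (mspan V N I)) < mrank (restr N (insert x (mspan V N I)))"
    using mrank_restr_mspan[OF N \<open>I \<in> N\<close>] by simp
qed

section \<open>Walks in RG(M,N;k)\<close>

lemma symp_rg_adj: "symp (rg_adj M N k)"
  unfolding rg_adj_def by (intro sympI) (auto simp: Un_commute)

lemma rg_reach_sym: "(rg_adj M N k)\<^sup>*\<^sup>* S T \<Longrightarrow> (rg_adj M N k)\<^sup>*\<^sup>* T S"
  using sympD[OF symp_rtranclp[OF symp_rg_adj]] .

lemma rg_reach_via_neighbours:
  assumes "rg_adj M N k S S'" "rg_adj M N k T T'" "(rg_adj M N k)\<^sup>*\<^sup>* S' T'"
  shows "(rg_adj M N k)\<^sup>*\<^sup>* S T"
proof -
  have "(rg_adj M N k)\<^sup>*\<^sup>* S' T"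
    using assms(3) sympD[OF symp_rg_adj assms(2)] by (rule rtranclp.rtrancl_into_rtrancl)
  with assms(1) show ?thesis by (rule converse_rtranclp_into_rtranclp)
qed

definition rg_connected_at :: "'a set set \<Rightarrow> 'a set set \<Rightarrow> nat \<Rightarrow> nat \<Rightarrow> bool" where
  "rg_connected_at M N k d \<longleftrightarrow> (\<forall>S\<in>rg_vertices M N k. \<forall>T\<in>rg_vertices M N k.
     card (S - T) = d \<longrightarrow> (rg_adj M N k)\<^sup>*\<^sup>* S T)"

locale matroid_pair =
  fixes V :: "'a set" and M N :: "'a set set"
  assumes M: "matroid V M" and N: "matroid V N"
begin

lemma rg_vertex_finite: "S \<in> rg_vertices M N k \<Longrightarrow> finite S"
  using matroid_indep_finite[OF M] by (simp add: rg_vertices_def)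

lemma rg_adj_exchange:
  assumes S: "S \<in> rg_vertices M N k" and y: "y \<notin> S" "insert y S \<in> M"
    and x: "x \<in> S" "insert y (S - {x}) \<in> N"
  shows "rg_adj M N k S (insert y (S - {x}))"
proof -
  have fin: "finite S" using rg_vertex_finite[OF S] .
  have card_S: "card S = k" using S unfolding rg_vertices_def by simp
  have "insert y (S - {x}) \<in> rg_vertices M N k"
    unfolding rg_vertices_def
    using matroid_indep_subset[OF M y(2), of "insert y (S - {x})"] x(2)
      card_insert_Diff_singleton[OF fin x(1) y(1)] card_S by auto
  moreover have "S \<union> insert y (S - {x}) = insert y S" using x(1) by blast
  moreover have "card (insert y S) = k + 1" using fin y(1) card_S by simp
  ultimately show ?thesis using S y(2) unfolding rg_adj_def by simp
qed

lemma rg_adj_towards: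
  assumes S: "S \<in> rg_vertices M N k" and T: "T \<in> rg_vertices M N k"
    and y: "y \<in> T - S" "insert y S \<in> M"
  obtains S' where "rg_adj M N k S S'" "card (S' - T) = card (S - T) - 1"
proof -
  have "T \<in> N" using T unfolding rg_vertices_def by simp
  moreover have "insert y (S \<inter> T) \<subseteq> T" using y(1) by blast
  ultimately have "insert y (S \<inter> T) \<in> N" by (rule matroid_indep_subset[OF N])
  moreover have "card (S \<inter> T) < card T"
    using y(1) rg_vertex_finite[OF T] by (intro psubset_card_mono) auto
  moreover have "S \<in> N" "card T = card S" using S T unfolding rg_vertices_def by auto
  ultimately obtain x where x: "x \<in> S - T" "insert y (S - {x}) \<in> N"
    using matroid_exchange_extend[OF N _ Int_lower1, of S y T] y(1) by auto
  have "insert y (S - {x}) - T = (S - T) - {x}" using y(1) by blast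
  then have "card (insert y (S - {x}) - T) = card (S - T) - 1"
    using x(1) rg_vertex_finite[OF S] by simp
  then show ?thesis using that rg_adj_exchange[OF S _ y(2)] x y(1) by blast
qed

lemma rg_vertices_card_Diff_sym:
  "S \<in> rg_vertices M N k \<Longrightarrow> T \<in> rg_vertices M N k \<Longrightarrow> card (T - S) = card (S - T)"
proof -
  assume ST: "S \<in> rg_vertices M N k" "T \<in> rg_vertices M N k"
  then have "finite S" "finite T" "card S = card T"
    using rg_vertex_finite[OF ST(1)] rg_vertex_finite[OF ST(2)] by (auto simp: rg_vertices_def)
  then show ?thesis
    using card_Diff_subset_Int[of T S] card_Diff_subset_Int[of S T] by (simp add: Int_commute)
qed

lemma rg_connected_if_augmentable:
  assumes IH: "rg_connected_at M N k d"
    and S: "S \<in> rg_vertices M N k" and T: "T \<in> rg_vertices M N k" and d: "card (S - T) = Suc d"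
    and aug: "(\<exists>y\<in>T - S. insert y S \<in> M) \<or> (\<exists>y\<in>S - T. insert y T \<in> M)"
  shows "(rg_adj M N k)\<^sup>*\<^sup>* S T"
proof -
  have closer: "(rg_adj M N k)\<^sup>*\<^sup>* S T"
    if ST: "S \<in> rg_vertices M N k" "T \<in> rg_vertices M N k" "card (S - T) = Suc d"
      and y: "y \<in> T - S" "insert y S \<in> M" for S T y
  proof -
    obtain S' where S': "rg_adj M N k S S'" "card (S' - T) = d"
      using rg_adj_towards[OF ST(1,2) y] ST(3) by auto
    then have "(rg_adj M N k)\<^sup>*\<^sup>* S' T"
      using IH ST(2) unfolding rg_connected_at_def rg_adj_def by blast
    with S'(1) show ?thesis by (rule converse_rtranclp_into_rtranclp)
  qed
  from aug show ?thesis
  proof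
    assume "\<exists>y\<in>T - S. insert y S \<in> M"
    then show ?thesis using closer[OF S T d] by blast
  next
    assume "\<exists>y\<in>S - T. insert y T \<in> M"
    then have "(rg_adj M N k)\<^sup>*\<^sup>* T S"
      using closer[OF T S] rg_vertices_card_Diff_sym[OF S T] d by auto
    then show ?thesis by (rule rg_reach_sym)
  qed
qed

section \<open>The exchange digraph\<close>

text \<open>exch_reach F S n y: y is reachable in at most n steps from an element outside S \<union> F in
  the exchange digraph of S, which has an arc y' \<rightarrow> y whenever some x \<in> S \<inter> F has S - x + y'
  independent in M and S - x + y independent in N.\<close>
fun exch_reach :: "'a set \<Rightarrow> 'a set \<Rightarrow> nat \<Rightarrow> 'a \<Rightarrow> bool" where
  "exch_reach F S 0 y \<longleftrightarrow> y \<in> V - S - F"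
| "exch_reach F S (Suc n) y \<longleftrightarrow> exch_reach F S n y \<or> (y \<in> V - S \<and>
     (\<exists>x\<in>S \<inter> F. \<exists>y'. insert y (S - {x}) \<in> N \<and> insert y' (S - {x}) \<in> M \<and> exch_reach F S n y'))"

lemma exch_reach_outside: "exch_reach F S n y \<Longrightarrow> y \<in> V - S"
  by (induction n arbitrary: y) auto

text \<open>If no source (an element z with S + z independent in M) is reachable in fewer than n
  steps, the exchange of x1 for the source y0 destroys no arc of a path of length below n: the
  arcs it would destroy would give a shorter path to y0.\<close>
lemma exch_reach_exchange:
  assumes x1: "x1 \<in> S \<inter> F" and y0: "y0 \<notin> S" "insert y0 S \<in> M" "insert y0 (S - {x1}) \<in> N"
    and shortest: "\<forall>m<n. \<forall>z. insert z S \<in> M \<longrightarrow> \<not> exch_reach F S m z"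
  shows "j < n \<Longrightarrow> exch_reach F S j y \<Longrightarrow> y \<noteq> y0
    \<Longrightarrow> exch_reach F (insert y0 (S - {x1})) j y"
proof (induction j arbitrary: y)
  case 0
  then show ?case by auto
next
  case (Suc j)
  show ?case
  proof (cases "exch_reach F S j y")
    case True
    then show ?thesis using Suc by simp
  next
    case False
    then obtain x y' where y: "y \<in> V - S" and x: "x \<in> S \<inter> F"
      and arc: "insert y (S - {x}) \<in> N" "insert y' (S - {x}) \<in> M" "exch_reach F S j y'"
      using Suc.prems(2) by auto
    have y0_unreached: "\<not> exch_reach F S (Suc j) y0"
      using shortest Suc.prems(1) y0(2) by blast
    have "y0 \<in> V" using matroid_indep_subset_ground[OF M y0(2)] by blast
    have "x \<noteq> x1" using y0_unreached \<open>y0 \<in> V\<close> y0(1,3) arc(2,3) x1 by auto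
    have "insert y0 (S - {x}) \<notin> N" using y0_unreached \<open>y0 \<in> V\<close> y0(1) arc(2,3) x by auto
    have y': "y' \<in> V - S" "insert y' S \<notin> M"
      using exch_reach_outside[OF arc(3)] shortest Suc.prems(1) arc(3) by auto
    then have "y' \<noteq> y0" using y0(2) by blast
    have "insert y0 (insert y' (S - {x})) \<in> M"
      using matroid_exchange_insert[OF M _ _ y0(1) arc(2) y'(2) y0(2)] x y'(1) by blast
    then have "insert y' (insert y0 (S - {x1}) - {x}) \<in> M"
      by (rule matroid_indep_subset[OF M]) auto
    moreover have "insert y (insert y0 (S - {x1}) - {x}) \<in> N"
    proof -
      have "insert y (insert y0 (S - {x1, x})) \<in> N"
        using matroid_double_exchange[OF N _ _ \<open>x \<noteq> x1\<close>[symmetric] y0(1) _ y0(3) arc(1)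
            \<open>insert y0 (S - {x}) \<notin> N\<close>] x1 x y by blast
      moreover have "insert y0 (S - {x1}) - {x} = insert y0 (S - {x1, x})"
        using x y0(1) by blast
      ultimately show ?thesis by simp
    qed
    moreover have "exch_reach F (insert y0 (S - {x1})) j y'"
      using Suc.IH Suc.prems(1) arc(3) \<open>y' \<noteq> y0\<close> by simp
    ultimately show ?thesis
      using x \<open>x \<noteq> x1\<close> y Suc.prems(3) by auto
  qed
qed

end

section \<open>The induction step\<close>

locale rg_step = matroid_pair +
  fixes k d :: nat and I Sp Tp :: "'a set"
  assumes connected_at: "rg_connected_at M N k d"
    and vertex_S: "I \<union> Sp \<in> rg_vertices M N k" and vertex_T: "I \<union> Tp \<in> rg_vertices M N k"
    and disjoint: "I \<inter> Sp = {}" "I \<inter> Tp = {}" "Sp \<inter> Tp = {}"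
    and card_Sp: "card Sp = Suc d"
begin

abbreviation F :: "'a set" where "F \<equiv> mspan V N I"

lemma I_indep: "I \<in> N"
  using vertex_S matroid_indep_subset[OF N] unfolding rg_vertices_def by blast

lemma finite_I_Sp: "finite I" "finite Sp"
  using rg_vertex_finite[OF vertex_S] by auto

lemma card_I: "card I + Suc d = k"
  using vertex_S disjoint(1) finite_I_Sp card_Sp
  by (simp add: rg_vertices_def card_Un_disjoint)

lemma Sp_Tp_disjoint_F: "Sp \<inter> F = {}" "Tp \<inter> F = {}"
  using mspan_disjoint[OF N] vertex_S vertex_T disjoint(1,2) unfolding rg_vertices_def by auto

definition admissible :: "'a set \<Rightarrow> bool" where
  "admissible J \<longleftrightarrow> J \<subseteq> F \<and> J \<in> N \<and> card J = card I \<and> J \<union> Sp \<in> M \<and> J \<union> Tp \<in> M"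

lemma admissible_I: "admissible I"
  using subset_mspan[OF N I_indep] I_indep vertex_S vertex_T
  unfolding admissible_def rg_vertices_def by auto

lemma admissible_vertices:
  assumes "admissible J"
  shows "J \<union> Sp \<in> rg_vertices M N k" "J \<union> Tp \<in> rg_vertices M N k"
proof -
  have J: "J \<subseteq> F" "J \<in> N" "card J = card I" "J \<union> Sp \<in> M" "J \<union> Tp \<in> M"
    using assms unfolding admissible_def by auto
  have "finite J" using matroid_indep_finite[OF N J(2)] .
  have "J \<union> P \<in> N" "card (J \<union> P) = k" if "I \<union> P \<in> rg_vertices M N k" "I \<inter> P = {}" for P
  proof -
    have P: "I \<union> P \<in> N" "card (I \<union> P) = k" using that(1) unfolding rg_vertices_def by auto
    then have "P \<inter> F = {}" using mspan_disjoint[OF N] that(2) by blast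
    then show "J \<union> P \<in> N" using basis_of_mspan_Un_indep[OF N I_indep J(1-3) P(1)] by simp
    have "finite P" using that(1) rg_vertex_finite by blast
    then show "card (J \<union> P) = k"
      using P(2) \<open>P \<inter> F = {}\<close> J(1,3) \<open>finite J\<close> finite_I_Sp(1) that(2)
      by (metis card_Un_disjoint disjoint_iff subsetD)
  qed
  then show "J \<union> Sp \<in> rg_vertices M N k" "J \<union> Tp \<in> rg_vertices M N k"
    using vertex_S vertex_T disjoint J(4,5) unfolding rg_vertices_def by auto
qed

lemma admissible_Diff:
  "admissible J \<Longrightarrow> (J \<union> Sp) - (J \<union> Tp) = Sp"
  using Sp_Tp_disjoint_F disjoint(3) unfolding admissible_def by blast

definition stuck :: "'a set \<Rightarrow> bool" where
  "stuck J \<longleftrightarrow> (\<forall>z\<in>Tp. insert z (J \<union> Sp) \<notin> M) \<and> (\<forall>z\<in>Sp. insert z (J \<union> Tp) \<notin> M)"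

lemma stuck_insert_transfer:
  assumes J: "admissible J" and "stuck J" and y: "y \<notin> J \<union> Sp" "insert y (J \<union> Sp) \<in> M"
  shows "y \<notin> J \<union> Tp" "insert y (J \<union> Tp) \<in> M"
proof -
  show "y \<notin> J \<union> Tp" using \<open>stuck J\<close> y unfolding stuck_def by blast
  have "\<forall>w\<in>(J \<union> Sp) - (J \<union> Tp). insert w (J \<union> Tp) \<notin> M"
    using \<open>stuck J\<close> admissible_Diff[OF J] unfolding stuck_def by simp
  then show "insert y (J \<union> Tp) \<in> M"
    using matroid_insert_transfer[OF M _ _ _ _ y(2,1)] admissible_vertices[OF J]
    unfolding rg_vertices_def by auto
qed

lemma admissible_exchange:
  assumes J: "admissible J" and x: "x \<in> J" and y: "y \<in> F" "y \<notin> J"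
    and indep: "insert y ((J \<union> Sp) - {x}) \<in> N" "insert y (J \<union> Sp) \<in> M" "insert y (J \<union> Tp) \<in> M"
  shows "admissible (insert y (J - {x}))"
  unfolding admissible_def
proof (intro conjI)
  have J': "J \<subseteq> F" "J \<in> N" "card J = card I" using J unfolding admissible_def by auto
  show "insert y (J - {x}) \<subseteq> F" using J'(1) y(1) by blast
  show "insert y (J - {x}) \<in> N" by (rule matroid_indep_subset[OF N indep(1)]) blast
  show "card (insert y (J - {x})) = card I"
    using card_insert_Diff_singleton[OF matroid_indep_finite[OF N J'(2)] x y(2)] J'(3) by simp
  show "insert y (J - {x}) \<union> Sp \<in> M" by (rule matroid_indep_subset[OF M indep(2)]) blast
  show "insert y (J - {x}) \<union> Tp \<in> M" by (rule matroid_indep_subset[OF M indep(3)]) blast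
qed

text \<open>A source outside F can be exchanged into both J \<union> Sp and J \<union> Tp, because J + y is
  independent in N, and the two resulting neighbours are at distance d.\<close>
lemma connected_if_sink:
  assumes J: "admissible J" and "stuck J"
    and y: "y \<in> V - (J \<union> Sp) - F" "insert y (J \<union> Sp) \<in> M"
  shows "(rg_adj M N k)\<^sup>*\<^sup>* (J \<union> Sp) (J \<union> Tp)"
proof -
  define S T where "S = J \<union> Sp" and "T = J \<union> Tp"
  have S: "S \<in> rg_vertices M N k" and T: "T \<in> rg_vertices M N k"
    using admissible_vertices[OF J] unfolding S_def T_def by auto
  have J': "J \<subseteq> F" "J \<in> N" "card J = card I"
    using J unfolding admissible_def by auto
  have "y \<notin> T" "insert y T \<in> M"
    using stuck_insert_transfer[OF J \<open>stuck J\<close>] y unfolding T_def by auto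
  have "insert y I \<in> N" "y \<notin> I" using y(1) unfolding mspan_def by auto
  then have "J \<union> {y} \<in> N"
    using basis_of_mspan_Un_indep[OF N I_indep J', of "{y}"] y(1) by simp
  then have Jy: "insert y J \<in> N" by simp
  have card_J: "card J < k" using J'(3) card_I by simp
  obtain x where x: "x \<in> Sp" "insert y (S - {x}) \<in> N"
    using matroid_exchange_extend[OF N _ _ _ Jy, of S] S y(1) card_J
    unfolding S_def rg_vertices_def by auto
  obtain w where w: "w \<in> Tp" "insert y (T - {w}) \<in> N"
    using matroid_exchange_extend[OF N _ _ \<open>y \<notin> T\<close> Jy] T card_J
    unfolding T_def rg_vertices_def by auto
  have adj_S: "rg_adj M N k S (insert y (S - {x}))"
    using rg_adj_exchange[OF S _ _ _ x(2)] x(1) y unfolding S_def by blast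
  have adj_T: "rg_adj M N k T (insert y (T - {w}))"
    using rg_adj_exchange[OF T \<open>y \<notin> T\<close> \<open>insert y T \<in> M\<close> _ w(2)] w(1) unfolding T_def by blast
  have "insert y (S - {x}) - insert y (T - {w}) = Sp - {x}"
    using x(1) w(1) y(1) J'(1) Sp_Tp_disjoint_F disjoint(3) unfolding S_def T_def by blast
  then have "card (insert y (S - {x}) - insert y (T - {w})) = d"
    using card_Sp x(1) finite_I_Sp(2) by simp
  then have "(rg_adj M N k)\<^sup>*\<^sup>* (insert y (S - {x})) (insert y (T - {w}))"
    using connected_at adj_S adj_T unfolding rg_connected_at_def rg_adj_def by blast
  then show ?thesis using rg_reach_via_neighbours[OF adj_S adj_T] unfolding S_def T_def by blast
qed

lemma admissible_exchange_step:
  assumes J: "admissible J" and "stuck J"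
    and y: "insert y (J \<union> Sp) \<in> M" "exch_reach F (J \<union> Sp) (Suc n) y"
    and shortest: "\<forall>m<Suc n. \<forall>z. insert z (J \<union> Sp) \<in> M \<longrightarrow> \<not> exch_reach F (J \<union> Sp) m z"
  obtains J' y' where "admissible J'" "insert y' (J' \<union> Sp) \<in> M" "exch_reach F (J' \<union> Sp) n y'"
    "rg_adj M N k (J \<union> Sp) (J' \<union> Sp)" "rg_adj M N k (J \<union> Tp) (J' \<union> Tp)"
proof -
  define S T where "S = J \<union> Sp" and "T = J \<union> Tp"
  have "\<not> exch_reach F S n y" using shortest y(1) unfolding S_def by blast
  then obtain x1 y1 where y_out: "y \<in> V - S" and x1: "x1 \<in> S \<inter> F"
    and arc: "insert y (S - {x1}) \<in> N" "insert y1 (S - {x1}) \<in> M" "exch_reach F S n y1"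
    using y(2) unfolding S_def by auto
  have "x1 \<in> J" using x1 Sp_Tp_disjoint_F unfolding S_def by blast
  have "y \<in> F" using shortest y y_out unfolding S_def by fastforce
  have y1: "y1 \<in> V - S" "insert y1 S \<notin> M"
    using exch_reach_outside[OF arc(3)] shortest arc(3) unfolding S_def by auto
  have "y \<notin> T" "insert y T \<in> M"
    using stuck_insert_transfer[OF J \<open>stuck J\<close>] y(1) y_out unfolding S_def T_def by auto
  define J' where "J' = insert y (J - {x1})"
  have S': "J' \<union> Sp = insert y (S - {x1})" and T': "J' \<union> Tp = insert y (T - {x1})"
    using \<open>x1 \<in> J\<close> J Sp_Tp_disjoint_F unfolding J'_def S_def T_def admissible_def by auto
  have "admissible J'"
    unfolding J'_def using admissible_exchange[OF J \<open>x1 \<in> J\<close> \<open>y \<in> F\<close>] arc(1) y(1) y_out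
      \<open>insert y T \<in> M\<close> unfolding S_def T_def by blast
  moreover have "insert y1 (J' \<union> Sp) \<in> M"
    using matroid_exchange_insert[OF M _ _ _ arc(2) y1(2) y(1)[folded S_def]] x1 y1(1) y_out
    unfolding S' by (simp add: insert_commute)
  moreover have "exch_reach F (J' \<union> Sp) n y1"
    unfolding S'
  proof (rule exch_reach_exchange[OF x1 _ _ arc(1) _ _ arc(3)])
    show "y \<notin> S" "insert y S \<in> M" using y_out y(1) unfolding S_def by auto
    show "\<forall>m<Suc n. \<forall>z. insert z S \<in> M \<longrightarrow> \<not> exch_reach F S m z"
      using shortest unfolding S_def .
    show "y1 \<noteq> y" using y1(2) y(1) unfolding S_def by blast
  qed simp
  moreover have "rg_adj M N k S (J' \<union> Sp)"
    unfolding S' using rg_adj_exchange[OF _ _ _ _ arc(1)] admissible_vertices(1)[OF J] y_out y(1) x1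
    unfolding S_def by blast
  moreover have "rg_adj M N k T (J' \<union> Tp)"
    unfolding T' using rg_adj_exchange[OF _ \<open>y \<notin> T\<close> \<open>insert y T \<in> M\<close>] \<open>x1 \<in> J\<close>
      admissible_vertices[OF J] admissible_vertices(2)[OF \<open>admissible J'\<close>]
    unfolding T_def T' rg_vertices_def by blast
  ultimately show ?thesis using that unfolding S_def T_def by blast
qed

lemma connected_if_source:
  "admissible J \<Longrightarrow> insert y (J \<union> Sp) \<in> M \<Longrightarrow> exch_reach F (J \<union> Sp) n y
    \<Longrightarrow> (rg_adj M N k)\<^sup>*\<^sup>* (J \<union> Sp) (J \<union> Tp)"
proof (induction n arbitrary: J y rule: less_induct)
  case (less n)
  note J = less.prems(1)
  show ?case
  proof (cases "stuck J")
    case False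
    have "card ((J \<union> Sp) - (J \<union> Tp)) = Suc d"
      using admissible_Diff[OF J] card_Sp by simp
    moreover have "(J \<union> Tp) - (J \<union> Sp) = Tp"
      using J Sp_Tp_disjoint_F disjoint(3) unfolding admissible_def by blast
    ultimately show ?thesis
      using rg_connected_if_augmentable[OF connected_at admissible_vertices[OF J]] False
        admissible_Diff[OF J] unfolding stuck_def by auto
  next
    case True
    show ?thesis
    proof (cases "\<exists>m<n. \<exists>z. insert z (J \<union> Sp) \<in> M \<and> exch_reach F (J \<union> Sp) m z")
      case True
      then show ?thesis using less.IH J by blast
    next
      case False
      then have shortest: "\<forall>m<n. \<forall>z. insert z (J \<union> Sp) \<in> M \<longrightarrow> \<not> exch_reach F (J \<union> Sp) m z"
        by blast
      show ?thesis
      proof (cases n)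
        case 0
        then show ?thesis
          using connected_if_sink[OF J \<open>stuck J\<close> _ less.prems(2)] less.prems(3) by simp
      next
        case (Suc m)
        then obtain J' y' where "admissible J'" "insert y' (J' \<union> Sp) \<in> M" "exch_reach F (J' \<union> Sp) m y'"
          "rg_adj M N k (J \<union> Sp) (J' \<union> Sp)" "rg_adj M N k (J \<union> Tp) (J' \<union> Tp)"
          using admissible_exchange_step[OF J \<open>stuck J\<close> less.prems(2)] less.prems(3) shortest
          by blast
        then show ?thesis using less.IH[of m] Suc rg_reach_via_neighbours by blast
      qed
    qed
  qed
qed

definition reached :: "'a set" where
  "reached = {y. \<exists>n. exch_reach F (I \<union> Sp) n y}"

definition exchangeable :: "'a set" where
  "exchangeable = {x \<in> I. \<exists>y\<in>reached. insert y ((I \<union> Sp) - {x}) \<in> M}"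

lemma outside_mspan_covered: "V - mspan V N (I - exchangeable) \<subseteq> Sp \<union> exchangeable \<union> reached"
proof
  fix v assume "v \<in> V - mspan V N (I - exchangeable)"
  then have v: "v \<in> V" "v \<notin> I - exchangeable" "insert v (I - exchangeable) \<in> N"
    unfolding mspan_def by auto
  show "v \<in> Sp \<union> exchangeable \<union> reached"
  proof (cases "v \<in> Sp \<union> exchangeable \<or> v \<notin> F")
    case True
    then show ?thesis using v(1,2) unfolding reached_def by (auto intro: exI[of _ 0])
  next
    case False
    then have "v \<notin> I \<union> Sp" "v \<in> F" using v(2) by auto
    then have "insert v I \<notin> N" unfolding mspan_def by auto
    then have "exchangeable \<noteq> {}" using v(3) by auto
    then have "card (I - exchangeable) < card I"
      using finite_I_Sp(1) unfolding exchangeable_def by (intro psubset_card_mono) auto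
    then obtain x where x: "x \<in> exchangeable" "insert v (I - {x}) \<in> N"
      using matroid_exchange_extend[OF N I_indep _ _ v(3)] \<open>v \<notin> I \<union> Sp\<close>
      unfolding exchangeable_def by auto
    then obtain y n where y: "insert y ((I \<union> Sp) - {x}) \<in> M" "exch_reach F (I \<union> Sp) n y"
      unfolding exchangeable_def reached_def by blast
    have "x \<in> I" using x(1) unfolding exchangeable_def by simp
    have "insert v (I - {x}) \<union> Sp \<in> N"
    proof (rule basis_of_mspan_Un_indep[OF N I_indep _ x(2)])
      show "insert v (I - {x}) \<subseteq> F" using \<open>v \<in> F\<close> subset_mspan[OF N I_indep] by blast
      show "card (insert v (I - {x})) = card I"
        using card_insert_Diff_singleton[OF finite_I_Sp(1) \<open>x \<in> I\<close>] \<open>v \<notin> I \<union> Sp\<close> by simp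
      show "I \<union> Sp \<in> N" using vertex_S unfolding rg_vertices_def by simp
      show "Sp \<inter> F = {}" using Sp_Tp_disjoint_F(1) .
    qed
    moreover have "insert v (I - {x}) \<union> Sp = insert v ((I \<union> Sp) - {x})"
      using \<open>x \<in> I\<close> disjoint(1) by blast
    ultimately have "exch_reach F (I \<union> Sp) (Suc n) v"
      using y v(1) \<open>v \<notin> I \<union> Sp\<close> \<open>x \<in> I\<close> subset_mspan[OF N I_indep] by auto
    then show ?thesis unfolding reached_def by blast
  qed
qed

lemma reached_not_augmenting:
  assumes no_source: "\<forall>n y. insert y (I \<union> Sp) \<in> M \<longrightarrow> \<not> exch_reach F (I \<union> Sp) n y"
    and "y \<in> reached"
  shows "insert y (Sp \<union> exchangeable) \<notin> M"
proof
  assume aug: "insert y (Sp \<union> exchangeable) \<in> M"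
  obtain n where reach: "exch_reach F (I \<union> Sp) n y" using assms(2) unfolding reached_def by blast
  have K: "Sp \<union> exchangeable \<subseteq> I \<union> Sp" unfolding exchangeable_def by blast
  have "y \<notin> I \<union> Sp" using exch_reach_outside[OF reach] by blast
  show False
  proof (cases "Sp \<union> exchangeable = I \<union> Sp")
    case True
    then show False using no_source aug reach by simp
  next
    case False
    then have "card (Sp \<union> exchangeable) < card (I \<union> Sp)"
      using K finite_I_Sp(1,2) by (intro psubset_card_mono) auto
    moreover have "I \<union> Sp \<in> M" using vertex_S unfolding rg_vertices_def by simp
    ultimately obtain x where "x \<in> (I \<union> Sp) - (Sp \<union> exchangeable)" "insert y ((I \<union> Sp) - {x}) \<in> M"
      using matroid_exchange_extend[OF M _ K \<open>y \<notin> I \<union> Sp\<close> aug] by blast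
    then show False using assms(2) unfolding exchangeable_def by blast
  qed
qed

lemma rank_violation_if_no_source:
  assumes no_source: "\<forall>n y. insert y (I \<union> Sp) \<in> M \<longrightarrow> \<not> exch_reach F (I \<union> Sp) n y"
  obtains X where "X \<subseteq> V" "is_flat V N (V - X)" "mrank (restr N (V - X)) \<le> k - 1"
    "mrank (restr M X) + mrank (restr N (V - X)) \<le> k"
proof -
  define G where "G = mspan V N (I - exchangeable)"
  have E: "exchangeable \<subseteq> I" unfolding exchangeable_def by blast
  have indep: "I - exchangeable \<in> N" by (rule matroid_indep_subset[OF N I_indep]) blast
  have "V - (V - G) = G" unfolding G_def mspan_def by blast
  moreover have "is_flat V N G" unfolding G_def using is_flat_mspan[OF N indep] .
  moreover have "mrank (restr N G) = card I - card exchangeable"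
    unfolding G_def using mrank_restr_mspan[OF N indep] E finite_I_Sp(1)
    by (simp add: card_Diff_subset finite_subset)
  moreover have "mrank (restr M (V - G)) \<le> card (Sp \<union> exchangeable)"
  proof (rule mrank_restr_le[OF M])
    have "I \<union> Sp \<in> M" using vertex_S unfolding rg_vertices_def by simp
    then have "Sp \<union> exchangeable \<in> M"
      by (rule matroid_indep_subset[OF M]) (use E in blast)
    moreover have "\<forall>y\<in>(V - G) - (Sp \<union> exchangeable). insert y (Sp \<union> exchangeable) \<notin> M"
      using outside_mspan_covered reached_not_augmenting[OF no_source] unfolding G_def by blast
    ultimately show "card A \<le> card (Sp \<union> exchangeable)" if "A \<in> M" "A \<subseteq> V - G" for A
      using matroid_card_le_maximal[OF M _ _ that(1)] that(2) by blast
  qed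
  moreover have "card (Sp \<union> exchangeable) = Suc d + card exchangeable"
    using disjoint(1) E finite_I_Sp card_Sp by (subst card_Un_disjoint) (auto intro: finite_subset)
  moreover have "card exchangeable \<le> card I" using E finite_I_Sp(1) by (rule card_mono[rotated])
  ultimately show ?thesis
    using that[of "V - G"] card_I by simp
qed

end

lemma rg_connected_at_0: "matroid V M \<Longrightarrow> rg_connected_at M N k 0"
  unfolding rg_connected_at_def
proof (intro ballI impI)
  fix S T assume M: "matroid V M"
    and ST: "S \<in> rg_vertices M N k" "T \<in> rg_vertices M N k" "card (S - T) = 0"
  have "finite S" "finite T" "card S = card T"
    using ST(1,2) matroid_indep_finite[OF M] unfolding rg_vertices_def by auto
  moreover have "S \<subseteq> T" using ST(3) \<open>finite S\<close> by auto
  ultimately show "(rg_adj M N k)\<^sup>*\<^sup>* S T" using card_subset_eq[of T S] by simp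
qed

lemma rg_connected_at_Suc:
  assumes M: "matroid V M" and N: "matroid V N" and "rg_connected_at M N k d"
    and rank: "\<forall>X. X \<subseteq> V \<and> is_flat V N (V - X) \<and> mrank (restr N (V - X)) \<le> k - 1
           \<longrightarrow> mrank (restr M X) + mrank (restr N (V - X)) \<ge> k + 1"
  shows "rg_connected_at M N k (Suc d)"
  unfolding rg_connected_at_def
proof (intro ballI impI)
  fix S T assume S: "S \<in> rg_vertices M N k" and T: "T \<in> rg_vertices M N k"
    and dist: "card (S - T) = Suc d"
  have S_eq: "S \<inter> T \<union> (S - T) = S" and T_eq: "S \<inter> T \<union> (T - S) = T" by blast+
  interpret rg_step V M N k d "S \<inter> T" "S - T" "T - S"
    using M N assms(3) S T dist by unfold_locales (auto simp: S_eq T_eq)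
  have "\<exists>n y. insert y S \<in> M \<and> exch_reach F S n y"
  proof (rule ccontr)
    assume "\<not> ?thesis"
    then have "\<forall>n y. insert y (S \<inter> T \<union> (S - T)) \<in> M \<longrightarrow> \<not> exch_reach F (S \<inter> T \<union> (S - T)) n y"
      unfolding S_eq by blast
    then obtain X where X: "X \<subseteq> V" "is_flat V N (V - X)" "mrank (restr N (V - X)) \<le> k - 1"
      and small: "mrank (restr M X) + mrank (restr N (V - X)) \<le> k"
      by (rule rank_violation_if_no_source)
    then have "mrank (restr M X) + mrank (restr N (V - X)) \<ge> k + 1" using rank by blast
    with small show False by simp
  qed
  then obtain n y where "insert y S \<in> M" "exch_reach F S n y" by blast
  then show "(rg_adj M N k)\<^sup>*\<^sup>* S T"
    using connected_if_source[OF admissible_I] unfolding S_eq T_eq by simp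
qed

theorem theorem5p3:
  fixes V :: "'a set" and M N :: "'a set set" and k :: nat
  assumes "matroid V M" and "matroid V N" and "k \<ge> 1"
    and "\<forall>X. X \<subseteq> V \<and> is_flat V N (V - X) \<and> mrank (restr N (V - X)) \<le> k - 1
           \<longrightarrow> mrank (restr M X) + mrank (restr N (V - X)) \<ge> k + 1"
  shows "rg_connected M N k"
proof -
  have "rg_connected_at M N k d" for d
  proof (induction d)
    case 0
    show ?case using rg_connected_at_0[OF assms(1)] .
  next
    case (Suc d)
    show ?case using rg_connected_at_Suc[OF assms(1,2) Suc assms(4)] .
  qed
  then show ?thesis unfolding rg_connected_def rg_connected_at_def by blast
qed

end
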